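(* Let $q$ be a prime power and $t\ge 2$ an integer. Then $OCAN(t,q+1,t,q-1)\le q^{t}-2$.
   Context: For positive integers $m,s$, the RT poset $[m\times s]$ is the set $\{1,\ldots,ms\}$ partitioned into $m$ blocks $B_i=\{is+1,\ldots,(i+1)s\}$ ($i=0,\ldots,m-1$); each block is a chain under the usual order of the integers, and elements of different blocks are incomparable. An anti-ideal is the complement of an ideal (a down-closed set). Given an $N\times n$ array over an alphabet $V$ of size $v$, a set of $t$ columns is covered if in the $N\times t$ subarray formed by those columns every $t$-tuple over $V$ appears as a row at least once. For positive integers with $2\le t\le ms$, an ordered covering array $OCA(N;t,m,s,v)$ is an $N\times ms$ array over an alphabet of size $v$ with columns labeled by the elements of $[m\times s]$ such that for every anti-ideal $J$ of size $t$ the set of columns labeled by $J$ is covered; $OCAN(t,m,s,v)$ is the smallest $N$ for which an $OCA(N;t,m,s,v)$ exists. *)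

theory Defs
  imports "HOL-Number_Theory.Number_Theory" "HOL-Library.FuncSet"
begin

text \<open>RT poset [m x s]: ground set {1..m*s}; element x lies in block (x-1) div s,
  i.e. B_i = {i*s+1, ..., (i+1)*s}; within a block the order is the integer order.\<close>

definition rt_le :: "nat \<Rightarrow> nat \<Rightarrow> nat \<Rightarrow> nat \<Rightarrow> bool" where
  "rt_le m s x y \<longleftrightarrow> x \<in> {1..m*s} \<and> y \<in> {1..m*s} \<and>
     (x - 1) div s = (y - 1) div s \<and> x \<le> y"

definition rt_ideal :: "nat \<Rightarrow> nat \<Rightarrow> nat set \<Rightarrow> bool" where
  "rt_ideal m s I \<longleftrightarrow> I \<subseteq> {1..m*s} \<and>
     (\<forall>y\<in>I. \<forall>x. rt_le m s x y \<longrightarrow> x \<in> I)"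

definition rt_anti_ideal :: "nat \<Rightarrow> nat \<Rightarrow> nat set \<Rightarrow> bool" where
  "rt_anti_ideal m s J \<longleftrightarrow> J \<subseteq> {1..m*s} \<and> rt_ideal m s ({1..m*s} - J)"

definition covered :: "nat \<Rightarrow> nat \<Rightarrow> (nat \<Rightarrow> nat \<Rightarrow> nat) \<Rightarrow> nat set \<Rightarrow> bool" where
  "covered N v A J \<longleftrightarrow> (\<forall>f \<in> J \<rightarrow>\<^sub>E {..<v}. \<exists>r<N. \<forall>j\<in>J. A r j = f j)"

definition is_OCA :: "nat \<Rightarrow> nat \<Rightarrow> nat \<Rightarrow> nat \<Rightarrow> nat \<Rightarrow> (nat \<Rightarrow> nat \<Rightarrow> nat) \<Rightarrow> bool" where
  "is_OCA N t m s v A \<longleftrightarrow>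
     (\<forall>r<N. \<forall>c\<in>{1..m*s}. A r c < v) \<and>
     (\<forall>J. rt_anti_ideal m s J \<and> card J = t \<longrightarrow> covered N v A J)"

definition OCAN :: "nat \<Rightarrow> nat \<Rightarrow> nat \<Rightarrow> nat \<Rightarrow> nat" where
  "OCAN t m s v = (LEAST N. \<exists>A. is_OCA N t m s v A)"

end

theory Submission
  imports Defs "HOL-Algebra.Algebraic_Closure"
begin

(*
  Let F be a field of order q; it exists as the fixed field of x \<mapsto> x^q in an algebraic
  closure of Z/p. Index rows by the polynomials f of degree < t over F. Block i < q of
  [(q + 1) \<times> t] records the Taylor coefficients of f at the i-th element of F, of order
  decreasing up the chain, and the last block records the coefficients of f, leading one on top.
  An anti-ideal J of size t consists of the top k_i elements of each block with \<Sum> k_i = t. If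
  two rows agree on J, their difference has a root of multiplicity k_i at the i-th point and
  vanishing top k_q coefficients, so it has degree < t - k_q but at least t - k_q roots: it is
  zero. Hence every J-tuple over F occurs in exactly one of the q^t rows. Merging the symbols
  0 and 1 leaves q - 1 symbols and makes the rows of the constant polynomials 0 and 1, whose
  entries all lie in {0, 1}, redundant; deleting them leaves q^t - 2 rows.
*)

section \<open>Frobenius in characteristic p\<close>

lemma (in cring) binomial_expansion:
  assumes a: "a \<in> carrier R" and b: "b \<in> carrier R"
  shows "(a \<oplus> b) [^] n = (\<Oplus>k\<in>{..n}. [(n choose k)] \<cdot> (a [^] k \<otimes> b [^] (n - k)))"
proof (induction n)
  case 0
  show ?case using a b by simp
next
  case (Suc n)
  define u where "u k = a [^] Suc k \<otimes> b [^] (n - k)" for k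
  have uc: "u k \<in> carrier R" for k unfolding u_def using a b by simp
  have "(\<Oplus>k\<in>{..n}. [(n choose k)] \<cdot> (a [^] k \<otimes> b [^] (n - k))) \<otimes> a
      = (\<Oplus>k\<in>{..n}. [(n choose k)] \<cdot> (a [^] k \<otimes> b [^] (n - k)) \<otimes> a)"
    using a b by (simp add: finsum_ldistr)
  also have "\<dots> = (\<Oplus>k\<in>{..n}. [(n choose k)] \<cdot> u k)"
    using a b by (intro finsum_cong') (auto simp: add_pow_ldistr add_pow_rdistr u_def m_ac)
  finally have times_a: "(\<Oplus>k\<in>{..n}. [(n choose k)] \<cdot> (a [^] k \<otimes> b [^] (n - k))) \<otimes> a
      = (\<Oplus>k\<in>{..n}. [(n choose k)] \<cdot> u k)" .
  have "(\<Oplus>k\<in>{..n}. [(n choose k)] \<cdot> (a [^] k \<otimes> b [^] (n - k))) \<otimes> b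
      = (\<Oplus>k\<in>{..n}. [(n choose k)] \<cdot> (a [^] k \<otimes> b [^] (n - k)) \<otimes> b)"
    using a b by (simp add: finsum_ldistr)
  also have "\<dots> = (\<Oplus>k\<in>{..n}. [(n choose k)] \<cdot> (a [^] k \<otimes> b [^] (Suc n - k)))"
    using a b by (intro finsum_cong') (auto simp: add_pow_ldistr m_assoc Suc_diff_le)
  also have "\<dots> = (\<Oplus>k\<in>{..Suc n}. [(n choose k)] \<cdot> (a [^] k \<otimes> b [^] (Suc n - k)))"
    using a b by (simp add: binomial_eq_0)
  also have "\<dots> = (\<Oplus>k\<in>{..n}. [(n choose Suc k)] \<cdot> u k) \<oplus> b [^] Suc n"
    using a b by (simp del: finsum_Suc add: finsum_Suc2 u_def)
  finally have times_b: "(\<Oplus>k\<in>{..n}. [(n choose k)] \<cdot> (a [^] k \<otimes> b [^] (n - k))) \<otimes> b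
      = (\<Oplus>k\<in>{..n}. [(n choose Suc k)] \<cdot> u k) \<oplus> b [^] Suc n" .
  have "(\<Oplus>k\<in>{..Suc n}. [(Suc n choose k)] \<cdot> (a [^] k \<otimes> b [^] (Suc n - k)))
      = (\<Oplus>k\<in>{..n}. [(n choose k)] \<cdot> u k \<oplus> [(n choose Suc k)] \<cdot> u k) \<oplus> b [^] Suc n"
    using a b by (simp del: finsum_Suc add: finsum_Suc2 u_def add.nat_pow_mult)
  also have "\<dots> = (\<Oplus>k\<in>{..n}. [(n choose k)] \<cdot> u k) \<oplus> (\<Oplus>k\<in>{..n}. [(n choose Suc k)] \<cdot> u k)
      \<oplus> b [^] Suc n"
    using uc by (simp add: finsum_addf)
  also have "\<dots> = (a \<oplus> b) [^] Suc n"
    using a b uc by (simp add: Suc r_distr times_a times_b a_assoc)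
  finally show ?case ..
qed

lemma (in cring) add_pow_eq_zero_if_char_dvd:
  assumes char: "[(p::nat)] \<cdot> \<one> = \<zero>" and x: "x \<in> carrier R" and "p dvd m"
  shows "[m] \<cdot> x = \<zero>"
proof -
  obtain c where m: "m = p * c" using \<open>p dvd m\<close> by auto
  have "[p] \<cdot> x = ([p] \<cdot> \<one>) \<otimes> x" using x by (simp add: add_pow_ldistr)
  then have "[p] \<cdot> x = \<zero>" using char x by simp
  moreover have "[m] \<cdot> x = [c] \<cdot> ([p] \<cdot> x)" using x m by (simp add: add.nat_pow_pow)
  ultimately show ?thesis by simp
qed

lemma (in cring) frobenius_add:
  assumes p: "Factorial_Ring.prime (p::nat)" and char: "[p] \<cdot> \<one> = \<zero>"
    and a: "a \<in> carrier R" and b: "b \<in> carrier R"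
  shows "(a \<oplus> b) [^] p = a [^] p \<oplus> b [^] p"
proof -
  define T where "T k = [(p choose k)] \<cdot> (a [^] k \<otimes> b [^] (p - k))" for k
  have "p > 0" using p prime_gt_0_nat by blast
  have T_inner: "T k = \<zero>" if "0 < k" "k < p" for k
    unfolding T_def using a b that p
    by (intro add_pow_eq_zero_if_char_dvd[OF char] dvd_choose_prime) auto
  have "(a \<oplus> b) [^] p = (\<Oplus>k\<in>{..p}. T k)"
    unfolding T_def using binomial_expansion[OF a b] .
  also have "\<dots> = (\<Oplus>k\<in>{..p}. (if p = k then a [^] p else \<zero>) \<oplus> (if 0 = k then b [^] p else \<zero>))"
    using \<open>p > 0\<close> a b T_inner by (intro finsum_cong') (auto simp: T_def)
  also have "\<dots> = a [^] p \<oplus> b [^] p"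
    using a b finsum_singleton[of 0 "{..p}" "\<lambda>_. b [^] p"] finsum_singleton[of p "{..p}" "\<lambda>_. a [^] p"]
    by (simp add: finsum_addf)
  finally show ?thesis .
qed

lemma (in cring) frobenius_pow_add:
  assumes p: "Factorial_Ring.prime (p::nat)" and char: "[p] \<cdot> \<one> = \<zero>"
    and a: "a \<in> carrier R" and b: "b \<in> carrier R"
  shows "(a \<oplus> b) [^] (p ^ n) = a [^] (p ^ n) \<oplus> b [^] (p ^ n)"
proof (induction n)
  case (Suc n)
  have "(a \<oplus> b) [^] (p ^ Suc n) = ((a \<oplus> b) [^] (p ^ n)) [^] p"
    using a b by (simp add: nat_pow_pow mult.commute)
  also have "\<dots> = a [^] (p ^ Suc n) \<oplus> b [^] (p ^ Suc n)"
    using a b by (simp add: Suc frobenius_add[OF p char] nat_pow_pow mult.commute)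
  finally show ?case .
qed (use a b in simp)

section \<open>Fields of prime power order\<close>

lemma (in ring_hom_ring) hom_add_pow:
  assumes "x \<in> carrier R" shows "h ([(n::nat)] \<cdot>\<^bsub>R\<^esub> x) = [n] \<cdot>\<^bsub>S\<^esub> h x"
  by (induction n) (simp_all add: assms add.nat_pow_Suc R.add.nat_pow_Suc)

lemma (in residues) add_pow_one: "[(n::nat)] \<cdot> \<one> = int n mod m"
proof (induction n)
  case (Suc n)
  have "[Suc n] \<cdot> \<one> = (int n mod m + 1) mod m"
    using Suc by (simp add: add.nat_pow_Suc res_add_eq res_one_eq)
  then show ?case by (simp add: mod_add_right_eq add.commute)
qed (simp add: res_zero_eq)

lemma (in residues_prime) add_pow_p_one: "[p] \<cdot> \<one> = \<zero>"
  using add_pow_one[of p] by (simp add: res_zero_eq)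

lemma (in field) subfield_frobenius_fixed:
  assumes p: "Factorial_Ring.prime (p::nat)" and char: "[p] \<cdot> \<one> = \<zero>" and q: "q = p ^ n"
  shows "subfield {x \<in> carrier R. x [^] q = x} R"
proof -
  define F where "F = {x \<in> carrier R. x [^] q = x}"
  have "q \<noteq> 0" using q p by (simp add: prime_gt_0_nat)
  have "subring F R"
  proof (rule subringI)
    fix h assume "h \<in> F"
    then have h: "h \<in> carrier R" "h [^] q = h" unfolding F_def by auto
    have "(\<ominus> h) [^] q \<oplus> h = (\<ominus> h \<oplus> h) [^] q"
      using frobenius_pow_add[OF p char, of "\<ominus> h" h n] h q by simp
    also have "\<dots> = \<zero>" using h \<open>q \<noteq> 0\<close> by (simp add: l_neg nat_pow_zero)
    finally have "\<ominus> h = (\<ominus> h) [^] q" using h by (intro minus_equality) auto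
    then show "\<ominus> h \<in> F" unfolding F_def using h by simp
  next
    fix h1 h2 assume "h1 \<in> F" "h2 \<in> F"
    then show "h1 \<otimes> h2 \<in> F" "h1 \<oplus> h2 \<in> F"
      unfolding F_def using frobenius_pow_add[OF p char, of h1 h2 n] q
      by (simp_all add: nat_pow_distrib)
  qed (auto simp: F_def)
  then show ?thesis unfolding F_def[symmetric]
  proof (rule subfieldI')
    fix k assume "k \<in> F - {\<zero>}"
    then have k: "k \<in> carrier R" "k [^] q = k" "k \<noteq> \<zero>" unfolding F_def by auto
    then have inv_k: "inv k \<in> carrier R" "k \<otimes> inv k = \<one>" by (simp_all add: field_Units)
    then have "k \<otimes> (inv k) [^] q = \<one>" using k by (metis nat_pow_distrib nat_pow_one)
    then have "inv k = (inv k) [^] q" using k inv_k by (intro comm_inv_char) auto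
    then show "inv k \<in> F" unfolding F_def using inv_k by simp
  qed
qed

definition (in ring) X_minus :: "'a \<Rightarrow> 'a list" where "X_minus a = [\<one>, \<ominus> a]"

definition (in ring) X_pow_minus_X :: "nat \<Rightarrow> 'a list" where
  "X_pow_minus_X q = X [^]\<^bsub>poly_ring R\<^esub> q \<ominus>\<^bsub>poly_ring R\<^esub> X"

lemma (in domain) X_minus_closed: "a \<in> carrier R \<Longrightarrow> X_minus a \<in> carrier (poly_ring R)"
  unfolding X_minus_def univ_poly_carrier[symmetric] polynomial_def by simp

lemma (in ring) eval_X_minus_self: "a \<in> carrier R \<Longrightarrow> eval (X_minus a) a = \<zero>"
  unfolding X_minus_def by (simp add: r_neg)

lemma (in domain) eval_ring_hom:
  assumes "a \<in> carrier R" shows "ring_hom_ring (poly_ring R) R (\<lambda>f. eval f a)"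
proof -
  interpret UP: domain "poly_ring R" using univ_poly_is_domain[OF carrier_is_subring] .
  show ?thesis
    using ring_hom_ringI2[OF UP.ring_axioms ring_axioms eval_is_hom[OF carrier_is_subring assms]] .
qed

lemma (in domain) const_ring_hom: "ring_hom_ring R (poly_ring R) poly_of_const"
  using canonical_embedding_ring_hom[OF carrier_is_subring] by simp

lemma (in domain) poly_ring_char:
  assumes "[(p::nat)] \<cdot> \<one> = \<zero>"
  shows "[p] \<cdot>\<^bsub>poly_ring R\<^esub> \<one>\<^bsub>poly_ring R\<^esub> = \<zero>\<^bsub>poly_ring R\<^esub>"
proof -
  interpret C: ring_hom_ring R "poly_ring R" poly_of_const by (rule const_ring_hom)
  have "poly_of_const ([p] \<cdot> \<one>) = [p] \<cdot>\<^bsub>poly_ring R\<^esub> poly_of_const \<one>"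
    by (rule C.hom_add_pow) simp
  then show ?thesis using assms by (simp add: poly_of_const_def univ_poly_one univ_poly_zero)
qed

lemma (in domain) X_pow_minus_X_closed: "X_pow_minus_X q \<in> carrier (poly_ring R)"
proof -
  interpret UP: domain "poly_ring R" using univ_poly_is_domain[OF carrier_is_subring] .
  show ?thesis unfolding X_pow_minus_X_def using var_closed(1)[OF carrier_is_subring] by simp
qed

lemma (in domain) eval_X_pow_minus_X:
  assumes x: "x \<in> carrier R" shows "eval (X_pow_minus_X q) x = x [^] q \<ominus> x"
proof -
  interpret UP: domain "poly_ring R" using univ_poly_is_domain[OF carrier_is_subring] .
  interpret E: ring_hom_ring "poly_ring R" R "\<lambda>f. eval f x" using eval_ring_hom[OF x] .
  have "X \<in> carrier (poly_ring R)" using var_closed(1)[OF carrier_is_subring] .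
  then show ?thesis
    unfolding X_pow_minus_X_def a_minus_def using eval_var[OF x] by (simp add: E.hom_nat_pow)
qed

lemma (in domain) degree_X_pow_minus_X:
  assumes "q \<ge> 2" shows "degree (X_pow_minus_X q) = q"
proof -
  interpret UP: domain "poly_ring R" using univ_poly_is_domain[OF carrier_is_subring] .
  have X: "X \<in> carrier (poly_ring R)" using var_closed(1)[OF carrier_is_subring] .
  then have "polynomial (carrier R) (\<ominus>\<^bsub>poly_ring R\<^esub> X)"
    using univ_poly_carrier by blast
  moreover have "degree (\<ominus>\<^bsub>poly_ring R\<^esub> X) = 1"
    using univ_poly_a_inv_degree[OF carrier_is_subring X] by (simp add: var_def)
  moreover have "X [^]\<^bsub>poly_ring R\<^esub> q = monom \<one> q"
    using unitary_monom_eq_var_pow[OF carrier_is_subring] by simp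
  moreover have "polynomial (carrier R) (monom \<one> q)" "degree (monom \<one> q) = q"
    using monom_is_polynomial[OF carrier_is_subring, of \<one> q] by (simp_all add: monom_def)
  ultimately show ?thesis
    unfolding X_pow_minus_X_def a_minus_def univ_poly_add
    using poly_add_degree_eq[OF carrier_is_subring] assms by simp
qed

text \<open>Writing \<open>X = (X - a) + a\<close>, Frobenius and \<open>a^q = a\<close> give
  \<open>X^q - X = (X - a)^q - (X - a)\<close>.\<close>
lemma (in domain) X_pow_minus_X_factor:
  assumes p: "Factorial_Ring.prime (p::nat)" and char: "[p] \<cdot> \<one> = \<zero>" and q: "q = p ^ n"
    and a: "a \<in> carrier R" and aq: "a [^] q = a"
  shows "X_pow_minus_X q =
    X_minus a \<otimes>\<^bsub>poly_ring R\<^esub> (X_minus a [^]\<^bsub>poly_ring R\<^esub> (q - 1) \<ominus>\<^bsub>poly_ring R\<^esub> \<one>\<^bsub>poly_ring R\<^esub>)"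
proof -
  interpret UP: domain "poly_ring R" using univ_poly_is_domain[OF carrier_is_subring] .
  interpret C: ring_hom_ring R "poly_ring R" poly_of_const by (rule const_ring_hom)
  let ?Y = "X_minus a" and ?c = "poly_of_const a"
  have Y: "?Y \<in> carrier (poly_ring R)" and c: "?c \<in> carrier (poly_ring R)"
    using X_minus_closed[OF a] C.hom_closed[OF a] by auto
  have X: "X = ?Y \<oplus>\<^bsub>poly_ring R\<^esub> ?c"
    using a by (auto simp: X_minus_def var_def poly_of_const_def univ_poly_add l_neg)
  have "?c [^]\<^bsub>poly_ring R\<^esub> q = ?c"
    using C.hom_nat_pow[OF a, of q] aq by simp
  then have "X [^]\<^bsub>poly_ring R\<^esub> q = ?Y [^]\<^bsub>poly_ring R\<^esub> q \<oplus>\<^bsub>poly_ring R\<^esub> ?c"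
    unfolding X q using UP.frobenius_pow_add[OF p poly_ring_char[OF char] Y c] by simp
  moreover have "?Y [^]\<^bsub>poly_ring R\<^esub> q = ?Y \<otimes>\<^bsub>poly_ring R\<^esub> ?Y [^]\<^bsub>poly_ring R\<^esub> (q - 1)"
    using q p Y UP.nat_pow_Suc2[of ?Y "q - 1"] by (simp add: prime_gt_0_nat)
  ultimately have "X_pow_minus_X q =
      (?Y [^]\<^bsub>poly_ring R\<^esub> q \<oplus>\<^bsub>poly_ring R\<^esub> ?c) \<ominus>\<^bsub>poly_ring R\<^esub> (?Y \<oplus>\<^bsub>poly_ring R\<^esub> ?c)"
    unfolding X_pow_minus_X_def using X by simp
  also have "\<dots> = ?Y [^]\<^bsub>poly_ring R\<^esub> q \<ominus>\<^bsub>poly_ring R\<^esub> ?Y"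
    using Y c UP.nat_pow_closed[OF Y, of q] by (simp add: UP.ring_simprules)
  also have "\<dots> = ?Y \<otimes>\<^bsub>poly_ring R\<^esub> ?Y [^]\<^bsub>poly_ring R\<^esub> (q - 1) \<ominus>\<^bsub>poly_ring R\<^esub> ?Y"
    using \<open>?Y [^]\<^bsub>poly_ring R\<^esub> q = _\<close> by simp
  finally show ?thesis using Y by (simp add: a_minus_def UP.r_distr UP.r_minus)
qed

text \<open>A double root \<open>a\<close> would make \<open>X - a\<close> divide \<open>(X - a)^(q-1) - 1\<close>, whose value at
  \<open>a\<close> is \<open>-1\<close>.\<close>
lemma (in domain) alg_mult_X_pow_minus_X_le_1:
  assumes p: "Factorial_Ring.prime (p::nat)" and char: "[p] \<cdot> \<one> = \<zero>" and q: "q = p ^ n"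
    and "q \<ge> 2"
  shows "alg_mult (X_pow_minus_X q) a \<le> 1"
proof (rule ccontr)
  interpret UP: domain "poly_ring R" using univ_poly_is_domain[OF carrier_is_subring] .
  let ?P = "X_pow_minus_X q" and ?Y = "X_minus a"
  let ?Q = "?Y [^]\<^bsub>poly_ring R\<^esub> (q - 1) \<ominus>\<^bsub>poly_ring R\<^esub> \<one>\<^bsub>poly_ring R\<^esub>"
  assume "\<not> alg_mult ?P a \<le> 1"
  then have mult: "2 \<le> alg_mult ?P a" by simp
  have P: "?P \<in> carrier (poly_ring R)" "?P \<noteq> []"
    using X_pow_minus_X_closed degree_X_pow_minus_X[OF \<open>q \<ge> 2\<close>] \<open>q \<ge> 2\<close> by auto
  then have a: "a \<in> carrier R" using mult by (auto simp: alg_mult_def split: if_splits)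
  then have Y: "?Y \<in> carrier (poly_ring R)" "?Y \<noteq> \<zero>\<^bsub>poly_ring R\<^esub>"
    using X_minus_closed by (auto simp: X_minus_def univ_poly_zero)
  have "is_root ?P a" using mult alg_mult_gt_zero_iff_is_root[OF P(1), of a] by simp
  then have aq: "a [^] q = a" using eval_X_pow_minus_X[OF a] a by (simp add: is_root_def r_right_minus_eq)
  interpret E: ring_hom_ring "poly_ring R" R "\<lambda>f. eval f a" using eval_ring_hom[OF a] .
  have PQ: "?P = ?Y \<otimes>\<^bsub>poly_ring R\<^esub> ?Q" using X_pow_minus_X_factor[OF p char q a aq] .
  obtain G where G: "G \<in> carrier (poly_ring R)" "?P = ?Y [^]\<^bsub>poly_ring R\<^esub> (2::nat) \<otimes>\<^bsub>poly_ring R\<^esub> G"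
    using le_alg_mult_imp_pdivides[OF a P(1) mult] unfolding pdivides_def X_minus_def by auto
  then have "?Y \<otimes>\<^bsub>poly_ring R\<^esub> ?Q = ?Y \<otimes>\<^bsub>poly_ring R\<^esub> (?Y \<otimes>\<^bsub>poly_ring R\<^esub> G)"
    using PQ Y by (simp add: UP.m_assoc numeral_2_eq_2)
  then have "?Q = ?Y \<otimes>\<^bsub>poly_ring R\<^esub> G" using UP.m_lcancel Y G by simp
  then have "eval ?Q a = \<zero>" using Y G eval_X_minus_self[OF a] by simp
  moreover have "eval ?Q a = \<ominus> \<one>"
    using Y E.hom_nat_pow eval_X_minus_self[OF a] \<open>q \<ge> 2\<close> by (simp add: a_minus_def nat_pow_zero)
  ultimately show False by (metis minus_minus minus_zero one_closed one_not_zero)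
qed

lemma (in algebraically_closed) card_frobenius_fixed:
  assumes p: "Factorial_Ring.prime (p::nat)" and char: "[p] \<cdot> \<one> = \<zero>"
    and q: "q = p ^ n" and "n > 0"
  shows "card {x \<in> carrier L. x [^] q = x} = q"
proof -
  let ?P = "X_pow_minus_X q" and ?F = "{x \<in> carrier L. x [^] q = x}"
  have "q \<ge> 2"
  proof -
    have "p ^ 1 \<le> p ^ n" using prime_ge_2_nat[OF p] \<open>n > 0\<close> by (intro power_increasing) auto
    then show ?thesis using q prime_ge_2_nat[OF p] by simp
  qed
  have P: "?P \<in> carrier (poly_ring L)" "?P \<noteq> []"
    using X_pow_minus_X_closed degree_X_pow_minus_X[OF \<open>q \<ge> 2\<close>] \<open>q \<ge> 2\<close> by auto
  have "set_mset (roots ?P) = ?F"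
    using P eval_X_pow_minus_X
    by (auto simp: roots_mem_iff_is_root[OF P(1)] is_root_def r_right_minus_eq)
  moreover have "count (roots ?P) x = 1" if "x \<in># roots ?P" for x
  proof -
    have "0 < count (roots ?P) x" using that by simp
    moreover have "count (roots ?P) x \<le> 1"
      using alg_mult_X_pow_minus_X_le_1[OF p char q \<open>q \<ge> 2\<close>, of x]
      by (simp add: alg_mult_eq_count_roots[OF P(1)])
    ultimately show ?thesis by linarith
  qed
  ultimately have "size (roots ?P) = card ?F"
    by (simp add: size_multiset_overloaded_eq)
  also have "size (roots ?P) = q"
    using roots_over_carrier[OF P(1)] degree_X_pow_minus_X[OF \<open>q \<ge> 2\<close>] by (simp add: splitted_def)
  finally show ?thesis ..
qed

lemma exists_field_card_primepow:
  assumes "primepow (q::nat)"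
  obtains F :: "((int list \<times> nat) multiset \<Rightarrow> int) ring" where "field F" "card (carrier F) = q"
proof -
  obtain p n where p: "Factorial_Ring.prime (p::nat)" and "n > 0" and q: "q = p ^ n"
    using assms unfolding primepow_def by auto
  interpret Zp: residues_prime p "residue_ring (int p)"
    by unfold_locales (simp_all add: p)
  let ?L = Zp.alg_closure
  interpret L: algebraic_closure ?L "Zp.indexed_const ` carrier (residue_ring (int p))"
    using Zp.alg_closureE(1) .
  interpret H: ring_hom_ring "residue_ring (int p)" ?L Zp.indexed_const
    using ring_hom_ringI2[OF Zp.ring_axioms L.ring_axioms Zp.alg_closureE(2)] .
  have char: "[p] \<cdot>\<^bsub>?L\<^esub> \<one>\<^bsub>?L\<^esub> = \<zero>\<^bsub>?L\<^esub>"
    using H.hom_add_pow[of "\<one>\<^bsub>residue_ring (int p)\<^esub>" p] Zp.add_pow_p_one by simp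
  let ?F = "{x \<in> carrier ?L. x [^]\<^bsub>?L\<^esub> q = x}"
  have "subfield ?F ?L" using L.subfield_frobenius_fixed[OF p char q] .
  then have "field (?L\<lparr>carrier := ?F\<rparr>)" using L.subfield_iff(2) by blast
  moreover have "card ?F = q" using L.card_frobenius_fixed[OF p char q \<open>n > 0\<close>] .
  ultimately show ?thesis using that[of "?L\<lparr>carrier := ?F\<rparr>"] by simp
qed

section \<open>Taylor coefficients\<close>

lemma (in ring) add_right_minus_cancel:
  assumes "a \<in> carrier R" "b \<in> carrier R" "c \<in> carrier R"
  shows "(a \<oplus> c) \<ominus> (b \<oplus> c) = a \<ominus> b"
  using assms by (simp add: ring_simprules)

definition (in ring) taylor_quot :: "'a \<Rightarrow> 'a list \<Rightarrow> 'a list" where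
  "taylor_quot a f = f pdiv X_minus a"

text \<open>The coefficient of \<open>(X - a)^j\<close> in the expansion of \<open>f\<close> around \<open>a\<close>, i.e. the
  \<open>j\<close>-th Hasse derivative of \<open>f\<close> at \<open>a\<close>.\<close>
definition (in ring) taylor_coeff :: "nat \<Rightarrow> 'a list \<Rightarrow> 'a \<Rightarrow> 'a" where
  "taylor_coeff j f a = eval ((taylor_quot a ^^ j) f) a"

context field
begin

lemma taylor_quot_closed:
  "a \<in> carrier R \<Longrightarrow> f \<in> carrier (poly_ring R) \<Longrightarrow> taylor_quot a f \<in> carrier (poly_ring R)"
  unfolding taylor_quot_def
  using long_division_closed(1)[OF carrier_is_subfield _ X_minus_closed] by simp

lemma taylor_coeff_closed:
  assumes "a \<in> carrier R" "f \<in> carrier (poly_ring R)"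
  shows "taylor_coeff j f a \<in> carrier R"
proof -
  have "(taylor_quot a ^^ j) f \<in> carrier (poly_ring R)"
    using assms by (induction j) (auto simp: taylor_quot_closed)
  then show ?thesis
    unfolding taylor_coeff_def using assms(1) eval_in_carrier polynomial_incl univ_poly_carrier
    by blast
qed

lemma taylor_coeff_0: "taylor_coeff 0 f a = eval f a"
  by (simp add: taylor_coeff_def)

lemma taylor_coeff_Suc: "taylor_coeff (Suc j) f a = taylor_coeff j (taylor_quot a f) a"
  by (simp only: taylor_coeff_def funpow_Suc_right comp_def)

lemma taylor_coeff_Nil:
  assumes "a \<in> carrier R" shows "taylor_coeff j [] a = \<zero>"
proof -
  have "(taylor_quot a ^^ j) [] = []"
    using long_division_zero(1)[OF carrier_is_subfield X_minus_closed[OF assms]]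
    by (induction j) (simp_all add: taylor_quot_def)
  then show ?thesis by (simp add: taylor_coeff_def)
qed

lemma taylor_coeff_one:
  assumes a: "a \<in> carrier R" shows "taylor_coeff j [\<one>] a = (if j = 0 then \<one> else \<zero>)"
proof (cases j)
  case (Suc i)
  have "[\<one>] \<in> carrier (poly_ring R)"
    unfolding univ_poly_carrier[symmetric] polynomial_def by simp
  then have "taylor_quot a [\<one>] = []"
    unfolding taylor_quot_def
    using pmod_const(1)[OF carrier_is_subfield _ X_minus_closed[OF a]] by (simp add: X_minus_def)
  then show ?thesis using Suc a by (simp add: taylor_coeff_Suc taylor_coeff_Nil)
qed (simp add: taylor_coeff_0)

lemma eq_poly_of_const_eval:
  assumes "r \<in> carrier (poly_ring R)" "length r \<le> 1"
  shows "r = poly_of_const (eval r a)"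
proof (cases r)
  case (Cons c rs)
  then have "r = [c]" "c \<in> carrier R" "c \<noteq> \<zero>"
    using assms unfolding univ_poly_carrier[symmetric] polynomial_def by auto
  then show ?thesis by (simp add: poly_of_const_def)
qed (simp add: poly_of_const_def)

lemma taylor_quot_decomposition:
  assumes a: "a \<in> carrier R" and f: "f \<in> carrier (poly_ring R)"
  shows "f = X_minus a \<otimes>\<^bsub>poly_ring R\<^esub> taylor_quot a f \<oplus>\<^bsub>poly_ring R\<^esub> poly_of_const (eval f a)"
proof -
  interpret UP: domain "poly_ring R" using univ_poly_is_domain[OF carrier_is_subring] .
  interpret E: ring_hom_ring "poly_ring R" R "\<lambda>f. eval f a" using eval_ring_hom[OF a] .
  let ?r = "f pmod X_minus a"
  have Y: "X_minus a \<in> carrier (poly_ring R)" "X_minus a \<noteq> []"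
    using X_minus_closed[OF a] by (auto simp: X_minus_def)
  have f_eq: "f = X_minus a \<otimes>\<^bsub>poly_ring R\<^esub> taylor_quot a f \<oplus>\<^bsub>poly_ring R\<^esub> ?r"
    using pdiv_pmod[OF carrier_is_subfield f Y(1)] unfolding taylor_quot_def .
  have r: "?r \<in> carrier (poly_ring R)"
    using long_division_closed(2)[OF carrier_is_subfield f Y(1)] .
  have "length ?r \<le> 1"
    using pmod_degree[OF carrier_is_subfield f Y] by (auto simp: X_minus_def)
  then have "?r = poly_of_const (eval ?r a)"
    using eq_poly_of_const_eval[OF r] by blast
  moreover have "eval f a = eval (X_minus a) a \<otimes> eval (taylor_quot a f) a \<oplus> eval ?r a"
    using f_eq Y(1) r taylor_quot_closed[OF a f] by (metis E.hom_add E.hom_mult UP.m_closed)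
  then have "eval f a = eval ?r a"
    using eval_X_minus_self[OF a] E.hom_closed[OF taylor_quot_closed[OF a f]] E.hom_closed[OF r]
    by simp
  ultimately show ?thesis using f_eq by simp
qed

lemma X_minus_divides_diff:
  assumes a: "a \<in> carrier R" and f: "f \<in> carrier (poly_ring R)" and g: "g \<in> carrier (poly_ring R)"
    and "eval f a = eval g a"
  shows "f \<ominus>\<^bsub>poly_ring R\<^esub> g =
    X_minus a \<otimes>\<^bsub>poly_ring R\<^esub> (taylor_quot a f \<ominus>\<^bsub>poly_ring R\<^esub> taylor_quot a g)"
proof -
  interpret UP: domain "poly_ring R" using univ_poly_is_domain[OF carrier_is_subring] .
  interpret C: ring_hom_ring R "poly_ring R" poly_of_const by (rule const_ring_hom)
  interpret E: ring_hom_ring "poly_ring R" R "\<lambda>f. eval f a" using eval_ring_hom[OF a] .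
  let ?Y = "X_minus a" and ?c = "poly_of_const (eval g a)"
  have Y: "?Y \<in> carrier (poly_ring R)" using X_minus_closed[OF a] .
  have c: "?c \<in> carrier (poly_ring R)" using C.hom_closed E.hom_closed[OF g] by blast
  have Q: "taylor_quot a f \<in> carrier (poly_ring R)" "taylor_quot a g \<in> carrier (poly_ring R)"
    using taylor_quot_closed[OF a] f g by auto
  have "f \<ominus>\<^bsub>poly_ring R\<^esub> g =
      (?Y \<otimes>\<^bsub>poly_ring R\<^esub> taylor_quot a f \<oplus>\<^bsub>poly_ring R\<^esub> ?c)
      \<ominus>\<^bsub>poly_ring R\<^esub> (?Y \<otimes>\<^bsub>poly_ring R\<^esub> taylor_quot a g \<oplus>\<^bsub>poly_ring R\<^esub> ?c)"
    using arg_cong2[OF taylor_quot_decomposition[OF a f] taylor_quot_decomposition[OF a g],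
        of "\<lambda>x y. x \<ominus>\<^bsub>poly_ring R\<^esub> y"] \<open>eval f a = eval g a\<close> by simp
  also have "\<dots> = ?Y \<otimes>\<^bsub>poly_ring R\<^esub> taylor_quot a f \<ominus>\<^bsub>poly_ring R\<^esub> ?Y \<otimes>\<^bsub>poly_ring R\<^esub> taylor_quot a g"
    using UP.add_right_minus_cancel Y c Q by simp
  finally show ?thesis using Y Q by (simp add: a_minus_def UP.r_distr UP.r_minus)
qed

lemma X_minus_pow_divides_diff:
  assumes a: "a \<in> carrier R"
  shows "\<lbrakk> f \<in> carrier (poly_ring R); g \<in> carrier (poly_ring R);
           \<And>j. j < k \<Longrightarrow> taylor_coeff j f a = taylor_coeff j g a \<rbrakk> \<Longrightarrow>
         (X_minus a [^]\<^bsub>poly_ring R\<^esub> k) pdivides (f \<ominus>\<^bsub>poly_ring R\<^esub> g)"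
proof (induction k arbitrary: f g)
  interpret UP: domain "poly_ring R" using univ_poly_is_domain[OF carrier_is_subring] .
  case 0
  then show ?case unfolding pdivides_def by (simp add: UP.one_divides)
next
  interpret UP: domain "poly_ring R" using univ_poly_is_domain[OF carrier_is_subring] .
  case (Suc k)
  have Y: "X_minus a \<in> carrier (poly_ring R)" using X_minus_closed[OF a] .
  have Q: "taylor_quot a f \<in> carrier (poly_ring R)" "taylor_quot a g \<in> carrier (poly_ring R)"
    using taylor_quot_closed[OF a] Suc.prems by auto
  have "taylor_coeff j (taylor_quot a f) a = taylor_coeff j (taylor_quot a g) a" if "j < k" for j
    using Suc.prems(3)[of "Suc j"] that by (simp add: taylor_coeff_Suc)
  then have "(X_minus a [^]\<^bsub>poly_ring R\<^esub> k) pdivides (taylor_quot a f \<ominus>\<^bsub>poly_ring R\<^esub> taylor_quot a g)"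
    using Suc.IH[OF Q] by blast
  then have "(X_minus a \<otimes>\<^bsub>poly_ring R\<^esub> X_minus a [^]\<^bsub>poly_ring R\<^esub> k) pdivides
      (X_minus a \<otimes>\<^bsub>poly_ring R\<^esub> (taylor_quot a f \<ominus>\<^bsub>poly_ring R\<^esub> taylor_quot a g))"
    unfolding pdivides_def using Y Q by (simp add: UP.divides_mult_lI)
  moreover have "eval f a = eval g a" using Suc.prems(3)[of 0] by (simp add: taylor_coeff_0)
  ultimately show ?case
    using X_minus_divides_diff[OF a Suc.prems(1,2)] UP.nat_pow_Suc2[OF Y] by simp
qed

lemma sum_multiplicities_le_degree:
  assumes h: "h \<in> carrier (poly_ring R)" "h \<noteq> []"
    and I: "finite I" "inj_on x I" "x ` I \<subseteq> carrier R"
    and dvd: "\<And>i. i \<in> I \<Longrightarrow> (X_minus (x i) [^]\<^bsub>poly_ring R\<^esub> k i) pdivides h"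
  shows "(\<Sum>i\<in>I. k i) \<le> degree h"
proof -
  let ?M = "roots h"
  have "(\<Sum>i\<in>I. k i) \<le> (\<Sum>i\<in>I. count ?M (x i))"
    using dvd I h alg_multE(2)[OF _ h]
    by (intro sum_mono) (auto simp: X_minus_def alg_mult_eq_count_roots[OF h(1)])
  also have "\<dots> = (\<Sum>a\<in>x ` I. count ?M a)"
    by (simp add: sum.reindex[OF I(2)])
  also have "\<dots> = (\<Sum>a\<in>x ` I \<inter> set_mset ?M. count ?M a)"
    using I(1) by (intro sum.mono_neutral_right) auto
  also have "\<dots> \<le> (\<Sum>a\<in>set_mset ?M. count ?M a)"
    by (intro sum_mono2) auto
  also have "\<dots> = size ?M" by (simp add: size_multiset_overloaded_eq)
  also have "\<dots> \<le> degree h" using size_roots_le_degree[OF h(1)] .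
  finally show ?thesis .
qed

lemma poly_eq_zero_if_multiplicities_exceed_degree:
  assumes h: "h \<in> carrier (poly_ring R)"
    and I: "finite I" "inj_on x I" "x ` I \<subseteq> carrier R"
    and dvd: "\<And>i. i \<in> I \<Longrightarrow> (X_minus (x i) [^]\<^bsub>poly_ring R\<^esub> k i) pdivides h"
    and coeff_h: "\<And>i. d \<le> i \<Longrightarrow> coeff h i = \<zero>" and "d \<le> (\<Sum>i\<in>I. k i)"
  shows "h = []"
proof (rule ccontr)
  assume "h \<noteq> []"
  moreover have "lead_coeff h \<noteq> \<zero>"
    using h \<open>h \<noteq> []\<close> unfolding univ_poly_carrier[symmetric] polynomial_def by simp
  ultimately have "coeff h (degree h) \<noteq> \<zero>" using lead_coeff_simp by metis
  then have "degree h < d" using coeff_h not_less by blast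
  then show False
    using sum_multiplicities_le_degree[OF h \<open>h \<noteq> []\<close> I dvd] \<open>d \<le> (\<Sum>i\<in>I. k i)\<close> by simp
qed

end

text \<open>The polynomial \<open>\<Sum>i<t. c i X^i\<close>; HOL-Algebra lists coefficients leading one first.\<close>
definition (in ring) poly_of_coeffs :: "nat \<Rightarrow> (nat \<Rightarrow> 'a) \<Rightarrow> 'a list" where
  "poly_of_coeffs t c = normalize (map (\<lambda>i. c (t - 1 - i)) [0..<t])"

context field
begin

lemma poly_of_coeffs_closed:
  "c \<in> {..<t} \<rightarrow> carrier R \<Longrightarrow> poly_of_coeffs t c \<in> carrier (poly_ring R)"
  unfolding poly_of_coeffs_def univ_poly_carrier[symmetric]
  by (rule normalize_gives_polynomial) auto

lemma coeff_poly_of_coeffs: "coeff (poly_of_coeffs t c) i = (if i < t then c i else \<zero>)"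
proof -
  have "coeff (poly_of_coeffs t c) i = coeff (map (\<lambda>i. c (t - 1 - i)) [0..<t]) i"
    unfolding poly_of_coeffs_def by (rule normalize_coeff[symmetric, THEN fun_cong])
  then show ?thesis
    using coeff_nth[of i "map (\<lambda>i. c (t - 1 - i)) [0..<t]"]
      coeff_length[of "map (\<lambda>i. c (t - 1 - i)) [0..<t]" i]
    by (cases "i < t") simp_all
qed

lemma poly_of_coeffs_eqI:
  assumes "c \<in> {..<t} \<rightarrow> carrier R" "f \<in> carrier (poly_ring R)"
    and "\<And>i. coeff f i = (if i < t then c i else \<zero>)"
  shows "poly_of_coeffs t c = f"
  using poly_of_coeffs_closed[OF assms(1)] assms(2-3) coeff_iff_polynomial_cond univ_poly_carrier
  by (metis coeff_poly_of_coeffs ext)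

lemma coeff_univ_poly_minus:
  assumes f: "f \<in> carrier (poly_ring R)" and g: "g \<in> carrier (poly_ring R)"
  shows "coeff (f \<ominus>\<^bsub>poly_ring R\<^esub> g) i = coeff f i \<ominus> coeff g i"
proof -
  have sets: "set f \<subseteq> carrier R" "set (map (\<lambda>a. \<ominus> a) g) \<subseteq> carrier R"
    using f g unfolding univ_poly_carrier[symmetric] polynomial_def by auto
  have "coeff (f \<ominus>\<^bsub>poly_ring R\<^esub> g) i = coeff f i \<oplus> coeff (map (\<lambda>a. \<ominus> a) g) i"
    unfolding a_minus_def univ_poly_a_inv_def'[OF carrier_is_subring g] univ_poly_add
    using poly_add_coeff[OF sets] by simp
  moreover have "coeff (map (\<lambda>a. \<ominus> a) g) i = \<ominus> coeff g i"
    using coeff_nth[of i g] coeff_nth[of i "map (\<lambda>a. \<ominus> a) g"] coeff_length[of g i]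
      coeff_length[of "map (\<lambda>a. \<ominus> a) g" i]
    by (cases "i < length g") simp_all
  ultimately show ?thesis by (simp add: a_minus_def)
qed

lemma coeffs_eq_if_taylor_coeffs_eq:
  fixes q :: nat
  assumes x: "inj_on x {..<q}" "x ` {..<q} \<subseteq> carrier R"
    and c: "c \<in> {..<t} \<rightarrow>\<^sub>E carrier R" and c': "c' \<in> {..<t} \<rightarrow>\<^sub>E carrier R"
    and k: "t \<le> (\<Sum>i<q. k i) + k_top"
    and taylor: "\<And>i d. i < q \<Longrightarrow> d < k i \<Longrightarrow>
      taylor_coeff d (poly_of_coeffs t c) (x i) = taylor_coeff d (poly_of_coeffs t c') (x i)"
    and top: "\<And>j. t - k_top \<le> j \<Longrightarrow> j < t \<Longrightarrow> c j = c' j"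
  shows "c = c'"
proof -
  interpret UP: domain "poly_ring R" using univ_poly_is_domain[OF carrier_is_subring] .
  let ?f = "poly_of_coeffs t c" and ?f' = "poly_of_coeffs t c'"
  have f: "?f \<in> carrier (poly_ring R)" "?f' \<in> carrier (poly_ring R)"
    using poly_of_coeffs_closed c c' by auto
  have "?f \<ominus>\<^bsub>poly_ring R\<^esub> ?f' = []"
  proof (rule poly_eq_zero_if_multiplicities_exceed_degree[where d = "t - k_top"])
    show "(X_minus (x i) [^]\<^bsub>poly_ring R\<^esub> k i) pdivides (?f \<ominus>\<^bsub>poly_ring R\<^esub> ?f')"
      if "i \<in> {..<q}" for i
      using that x taylor by (intro X_minus_pow_divides_diff f) auto
    show "coeff (?f \<ominus>\<^bsub>poly_ring R\<^esub> ?f') i = \<zero>" if "t - k_top \<le> i" for i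
      using that top c' by (auto simp: coeff_univ_poly_minus[OF f] coeff_poly_of_coeffs PiE_iff)
  qed (use f x k in auto)
  then have "?f = ?f'" using UP.r_right_minus_eq[OF f] by (simp add: univ_poly_zero)
  then have "c i = c' i" if "i < t" for i
    using coeff_poly_of_coeffs[of t c i] coeff_poly_of_coeffs[of t c' i] that by simp
  then show ?thesis using c c' by (intro PiE_ext) auto
qed

end

section \<open>Blocks of the RT poset\<close>

definition rt_block :: "nat \<Rightarrow> nat \<Rightarrow> nat set" where
  "rt_block s i = {i * s + 1..(i + 1) * s}"

lemma rt_block_index:
  assumes "x \<in> rt_block s i" shows "(x - 1) div s = i"
proof (rule div_nat_eqI)
  show "s * i \<le> x - 1" "x - 1 < s * Suc i"
    using assms by (auto simp: rt_block_def algebra_simps)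
qed

lemma mem_rt_block_index:
  assumes "x \<in> {1..m * s}"
  shows "(x - 1) div s < m" and "x \<in> rt_block s ((x - 1) div s)"
proof -
  have "s > 0" using assms by (cases s) auto
  with assms show "(x - 1) div s < m" by (auto simp: div_less_iff_less_mult)
  define d where "d = (x - 1) div s"
  have "d * s \<le> x - 1" "x - 1 < d * s + s"
    unfolding d_def
    using div_mult_mod_eq[of "x - 1" s] mod_less_divisor[OF \<open>s > 0\<close>, of "x - 1"] by linarith+
  moreover have "(d + 1) * s = d * s + s" by simp
  ultimately show "x \<in> rt_block s d" using assms unfolding rt_block_def by auto
qed

lemma card_eq_sum_rt_blocks:
  assumes "J \<subseteq> {1..m * s}"
  shows "card J = (\<Sum>i<m. card (J \<inter> rt_block s i))"
proof -
  have "J \<subseteq> (\<Union>i<m. J \<inter> rt_block s i)"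
  proof
    fix x assume "x \<in> J"
    then have "x \<in> {1..m * s}" using assms by blast
    then show "x \<in> (\<Union>i<m. J \<inter> rt_block s i)"
      using mem_rt_block_index[of x m s] \<open>x \<in> J\<close> by (intro UN_I[of "(x - 1) div s"]) auto
  qed
  then have "J = (\<Union>i<m. J \<inter> rt_block s i)" by blast
  also have "card \<dots> = (\<Sum>i<m. card (J \<inter> rt_block s i))"
  proof (rule card_UN_disjoint)
    show "\<forall>i\<in>{..<m}. \<forall>j\<in>{..<m}. i \<noteq> j \<longrightarrow> (J \<inter> rt_block s i) \<inter> (J \<inter> rt_block s j) = {}"
      by (fastforce dest: rt_block_index)
  qed (simp_all add: rt_block_def)
  finally show ?thesis .
qed

lemma rt_anti_ideal_contains_block_top:
  assumes J: "rt_anti_ideal m s J" and "i < m" and x: "x \<in> rt_block s i"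
    and "(i + 1) * s - x < card (J \<inter> rt_block s i)"
  shows "x \<in> J"
proof (rule ccontr)
  assume "x \<notin> J"
  have "(i + 1) * s \<le> m * s" using \<open>i < m\<close> by (intro mult_le_mono1) simp
  then have x_ideal: "x \<in> {1..m * s} - J"
    using x \<open>x \<notin> J\<close> by (auto simp: rt_block_def)
  have "J \<inter> rt_block s i \<subseteq> {x + 1..(i + 1) * s}"
  proof
    fix y assume y: "y \<in> J \<inter> rt_block s i"
    have "\<not> y \<le> x"
    proof
      assume "y \<le> x"
      then have "rt_le m s y x"
        using x_ideal y rt_block_index[OF x] rt_block_index[of y s i] \<open>(i + 1) * s \<le> m * s\<close>
        by (auto simp: rt_le_def rt_block_def)
      then have "y \<in> {1..m * s} - J"
        using J x_ideal unfolding rt_anti_ideal_def rt_ideal_def by blast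
      then show False using y by blast
    qed
    then show "y \<in> {x + 1..(i + 1) * s}" using y by (auto simp: rt_block_def)
  qed
  then have "card (J \<inter> rt_block s i) \<le> card {x + 1..(i + 1) * s}"
    by (intro card_mono) simp_all
  then show False using assms(4) by simp
qed

section \<open>The array of Taylor coefficients\<close>

text \<open>Rows are indexed by the coefficient vectors \<open>c\<close> of \<open>f = \<Sum>i<t. c i X^i\<close>. In block
  \<open>i < q\<close> the element at height \<open>j\<close> (counted from \<open>0\<close> at the bottom) holds the Taylor coefficient
  of \<open>f\<close> at \<open>x i\<close> of order \<open>t - 1 - j\<close>, so that anti-ideals see the low orders; in the last
  block it holds \<open>c j\<close>, so that they see the leading coefficients.\<close>
definition (in ring) rt_array_entry :: "nat \<Rightarrow> nat \<Rightarrow> (nat \<Rightarrow> 'a) \<Rightarrow> (nat \<Rightarrow> 'a) \<Rightarrow> nat \<Rightarrow> 'a" where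
  "rt_array_entry q t x c col =
    (if (col - 1) div t < q
     then taylor_coeff (t - 1 - (col - 1) mod t) (poly_of_coeffs t c) (x ((col - 1) div t))
     else c ((col - 1) mod t))"

context field
begin

lemma rt_array_entry_closed:
  assumes "x ` {..<q} \<subseteq> carrier R" "t > 0" "c \<in> {..<t} \<rightarrow> carrier R"
  shows "rt_array_entry q t x c col \<in> carrier R"
  using assms taylor_coeff_closed poly_of_coeffs_closed
  by (auto simp: rt_array_entry_def)

lemma rt_array_entry_taylor_block:
  assumes "i < q" "d < t"
  shows "rt_array_entry q t x c ((i + 1) * t - d) = taylor_coeff d (poly_of_coeffs t c) (x i)"
proof -
  have col: "(i + 1) * t - d \<in> rt_block t i" using assms(2) by (auto simp: rt_block_def)
  have "((i + 1) * t - d - 1) mod t = t - 1 - d"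
    using rt_block_index[OF col] minus_div_mult_eq_mod[of "(i + 1) * t - d - 1" t] assms(2)
    by (simp add: algebra_simps)
  then show ?thesis using rt_block_index[OF col] assms by (simp add: rt_array_entry_def)
qed

lemma rt_array_entry_last_block:
  assumes "j < t"
  shows "rt_array_entry q t x c (q * t + j + 1) = c j"
proof -
  have "q * t + j + 1 \<in> rt_block t q" using assms by (auto simp: rt_block_def)
  then show ?thesis using rt_block_index assms by (simp add: rt_array_entry_def)
qed

lemma rt_array_rows_inj:
  assumes x: "inj_on x {..<q}" "x ` {..<q} \<subseteq> carrier R" and "t > 0"
    and J: "rt_anti_ideal (q + 1) t J" "card J = t"
    and c: "c \<in> {..<t} \<rightarrow>\<^sub>E carrier R" and c': "c' \<in> {..<t} \<rightarrow>\<^sub>E carrier R"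
    and eq: "\<And>col. col \<in> J \<Longrightarrow> rt_array_entry q t x c col = rt_array_entry q t x c' col"
  shows "c = c'"
proof -
  define k where "k i = card (J \<inter> rt_block t i)" for i
  have "t = (\<Sum>i<Suc q. k i)"
    using J card_eq_sum_rt_blocks[of J "q + 1" t] by (simp add: rt_anti_ideal_def k_def)
  then have k_sum: "t \<le> (\<Sum>i<q. k i) + k q" by simp
  have k_le: "k i \<le> t" for i
    using card_mono[of "rt_block t i" "J \<inter> rt_block t i"] by (simp add: k_def rt_block_def)
  show ?thesis
  proof (rule coeffs_eq_if_taylor_coeffs_eq[OF x c c' k_sum])
    fix i d assume "i < q" "d < k i"
    then have "d < t" using k_le[of i] by simp
    then have "(i + 1) * t - d \<in> J"
      using \<open>i < q\<close> \<open>d < k i\<close>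
      by (intro rt_anti_ideal_contains_block_top[OF J(1), of i]) (auto simp: rt_block_def k_def)
    then show "taylor_coeff d (poly_of_coeffs t c) (x i) = taylor_coeff d (poly_of_coeffs t c') (x i)"
      using eq rt_array_entry_taylor_block[OF \<open>i < q\<close> \<open>d < t\<close>] by metis
  next
    fix j assume "t - k q \<le> j" "j < t"
    then have "q * t + j + 1 \<in> J"
      by (intro rt_anti_ideal_contains_block_top[OF J(1), of q]) (auto simp: rt_block_def k_def)
    then show "c j = c' j" using eq rt_array_entry_last_block[OF \<open>j < t\<close>] by metis
  qed
qed

lemma rt_array_rows_surj:
  assumes fin: "finite (carrier R)"
    and x: "inj_on x {..<q}" "x ` {..<q} \<subseteq> carrier R" and "t > 0"
    and J: "rt_anti_ideal (q + 1) t J" "card J = t"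
    and g: "g \<in> J \<rightarrow>\<^sub>E carrier R"
  obtains c where "c \<in> {..<t} \<rightarrow>\<^sub>E carrier R" "\<And>col. col \<in> J \<Longrightarrow> rt_array_entry q t x c col = g col"
proof -
  let ?C = "{..<t} \<rightarrow>\<^sub>E carrier R" and ?T = "J \<rightarrow>\<^sub>E carrier R"
  define row where "row c = restrict (rt_array_entry q t x c) J" for c
  have "inj_on row ?C"
  proof (rule inj_onI)
    fix c c' assume "c \<in> ?C" "c' \<in> ?C" "row c = row c'"
    then have "rt_array_entry q t x c col = rt_array_entry q t x c' col" if "col \<in> J" for col
      using that by (metis row_def restrict_apply')
    then show "c = c'"
      using rt_array_rows_inj[OF x \<open>t > 0\<close> J] \<open>c \<in> ?C\<close> \<open>c' \<in> ?C\<close> by blast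
  qed
  moreover have "row ` ?C \<subseteq> ?T"
    using rt_array_entry_closed[OF x(2) \<open>t > 0\<close>] by (auto simp: row_def PiE_def)
  moreover have "finite J" using J(2) \<open>t > 0\<close> card_ge_0_finite by blast
  ultimately have "row ` ?C = ?T"
    using fin J(2) by (intro card_subset_eq) (simp_all add: finite_PiE card_image card_PiE)
  then obtain c where "c \<in> ?C" "g = row c" using g by blast
  then show ?thesis using that by (simp add: row_def)
qed

lemma rt_array_entry_const_rows:
  assumes "x ` {..<q} \<subseteq> carrier R" "t > 0"
    and "c = (\<lambda>i\<in>{..<t}. \<zero>) \<or> c = (\<lambda>i\<in>{..<t}. if i = 0 then \<one> else \<zero>)"
  shows "rt_array_entry q t x c col \<in> {\<zero>, \<one>}"
proof -
  have one: "[\<one>] \<in> carrier (poly_ring R)"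
    unfolding univ_poly_carrier[symmetric] polynomial_def by simp
  have "poly_of_coeffs t c = [] \<or> poly_of_coeffs t c = [\<one>]"
    using assms(3)
  proof
    assume "c = (\<lambda>i\<in>{..<t}. \<zero>)"
    then have "poly_of_coeffs t c = []"
      by (intro poly_of_coeffs_eqI) (auto simp: univ_poly_zero_closed)
    then show ?thesis ..
  next
    assume "c = (\<lambda>i\<in>{..<t}. if i = 0 then \<one> else \<zero>)"
    then have "poly_of_coeffs t c = [\<one>]"
      using one \<open>t > 0\<close> by (intro poly_of_coeffs_eqI) auto
    then show ?thesis ..
  qed
  moreover have "c ((col - 1) mod t) \<in> {\<zero>, \<one>}"
    using assms(2,3) by (auto split: if_splits)
  moreover have "x ((col - 1) div t) \<in> carrier R" if "(col - 1) div t < q"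
    using assms(1) that by auto
  ultimately show ?thesis
    by (auto simp: rt_array_entry_def taylor_coeff_Nil taylor_coeff_one)
qed

end

lemma (in field) encoded_rt_array_realises:
  assumes fin: "finite (carrier R)" and enc: "bij_betw enc (carrier R) {..<v}"
    and x: "inj_on x {..<q}" "x ` {..<q} \<subseteq> carrier R" and "t > 0"
    and J: "rt_anti_ideal (q + 1) t J" "card J = t"
    and g: "g \<in> J \<rightarrow>\<^sub>E {..<v}"
  shows "\<exists>c\<in>{..<t} \<rightarrow>\<^sub>E carrier R. \<forall>j\<in>J. enc (rt_array_entry q t x c j) = g j"
proof -
  let ?dec = "the_inv_into (carrier R) enc"
  have "(\<lambda>j\<in>J. ?dec (g j)) \<in> J \<rightarrow>\<^sub>E carrier R"
    using g bij_betw_the_inv_into[OF enc] by (auto simp: bij_betw_def)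
  then obtain c where "c \<in> {..<t} \<rightarrow>\<^sub>E carrier R"
    and c: "\<And>j. j \<in> J \<Longrightarrow> rt_array_entry q t x c j = ?dec (g j)"
    by (rule rt_array_rows_surj[OF fin x \<open>t > 0\<close> J]) simp
  moreover have "enc (?dec (g j)) = g j" if "j \<in> J" for j
    using that g f_the_inv_into_f_bij_betw[OF enc] by auto
  ultimately show ?thesis by (intro bexI[of _ c]) auto
qed

section \<open>Ordered covering arrays\<close>

lemma OCAN_le_card_rows:
  fixes E :: "'r \<Rightarrow> nat \<Rightarrow> nat"
  assumes "finite S"
    and range: "\<And>c col. c \<in> S \<Longrightarrow> col \<in> {1..m * s} \<Longrightarrow> E c col < v"
    and cover: "\<And>J f. rt_anti_ideal m s J \<Longrightarrow> card J = t \<Longrightarrow> f \<in> J \<rightarrow>\<^sub>E {..<v} \<Longrightarrow>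
      \<exists>c\<in>S. \<forall>j\<in>J. E c j = f j"
  shows "OCAN t m s v \<le> card S"
proof -
  obtain row where row: "bij_betw row {0..<card S} S"
    using ex_bij_betw_nat_finite[OF \<open>finite S\<close>] by blast
  have "is_OCA (card S) t m s v (\<lambda>r. E (row r))"
    unfolding is_OCA_def covered_def
  proof (intro conjI allI impI ballI)
    fix r col assume "r < card S" "col \<in> {1..m * s}"
    moreover have "row r \<in> S" using row \<open>r < card S\<close> by (auto simp: bij_betw_def)
    ultimately show "E (row r) col < v" using range by blast
  next
    fix J f assume "rt_anti_ideal m s J \<and> card J = t" "f \<in> J \<rightarrow>\<^sub>E {..<v}"
    then obtain c where "c \<in> S" "\<forall>j\<in>J. E c j = f j" using cover by blast
    moreover have "c \<in> row ` {0..<card S}" using row \<open>c \<in> S\<close> by (simp add: bij_betw_def)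
    then obtain r where "r < card S" "row r = c" by auto
    ultimately show "\<exists>r<card S. \<forall>j\<in>J. E (row r) j = f j" by blast
  qed
  then have "\<exists>A. is_OCA (card S) t m s v A" by blast
  then show ?thesis unfolding OCAN_def by (rule Least_le)
qed

text \<open>A tuple with a nonzero entry lifts to one containing a symbol \<open>\<ge> 2\<close>, which \<open>c0\<close> and
  \<open>c1\<close> cannot realise; the all-zero tuple is realised by the three distinct \<open>{0, 1}\<close>-patterns
  \<open>0\<dots>0\<close>, \<open>1\<dots>1\<close> and \<open>01\<dots>1\<close>, one of which avoids \<open>c0\<close> and \<open>c1\<close>.\<close>
lemma cover_after_merging_0_1:
  fixes E :: "'r \<Rightarrow> nat \<Rightarrow> nat"
  assumes "2 \<le> card J" "2 \<le> v"
    and realise: "\<And>g. g \<in> J \<rightarrow>\<^sub>E {..<v} \<Longrightarrow> \<exists>c\<in>C. \<forall>j\<in>J. E c j = g j"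
    and small: "\<And>j. j \<in> J \<Longrightarrow> E c0 j \<le> 1 \<and> E c1 j \<le> 1"
    and f: "f \<in> J \<rightarrow>\<^sub>E {..<v - 1}"
  shows "\<exists>c\<in>C - {c0, c1}. \<forall>j\<in>J. E c j - 1 = f j"
proof (cases "\<exists>j\<in>J. f j \<noteq> 0")
  case True
  then obtain j0 where "j0 \<in> J" "f j0 \<noteq> 0" by blast
  have "(\<lambda>j\<in>J. f j + 1) \<in> J \<rightarrow>\<^sub>E {..<v}" using f by (auto simp: PiE_iff)
  then obtain c where "c \<in> C" and c: "\<forall>j\<in>J. E c j = f j + 1" using realise by fastforce
  then have "c \<noteq> c0" "c \<noteq> c1" using small[OF \<open>j0 \<in> J\<close>] \<open>f j0 \<noteq> 0\<close> \<open>j0 \<in> J\<close> by auto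
  moreover have "\<forall>j\<in>J. E c j - 1 = f j" using c by simp
  ultimately show ?thesis using \<open>c \<in> C\<close> by blast
next
  case False
  obtain P where "P \<subseteq> J" "card P = 2" using obtain_subset_with_card_n[OF \<open>2 \<le> card J\<close>] by blast
  then obtain j0 j1 where j: "j0 \<in> J" "j1 \<in> J" "j0 \<noteq> j1" by (auto simp: card_2_iff)
  have pattern: "\<exists>c\<in>C. \<forall>j\<in>J. E c j = (if j = j0 then a else b)" if "a \<le> 1" "b \<le> 1" for a b
    using that \<open>2 \<le> v\<close> realise[of "\<lambda>j\<in>J. if j = j0 then a else b"] by auto
  obtain d0 where "d0 \<in> C" and d0: "\<forall>j\<in>J. E d0 j = 0" using pattern[of 0 0] by auto
  obtain d1 where "d1 \<in> C" and d1: "\<forall>j\<in>J. E d1 j = 1" using pattern[of 1 1] by auto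
  obtain d2 where "d2 \<in> C" and d2: "\<forall>j\<in>J. E d2 j = (if j = j0 then 0 else 1)"
    using pattern[of 0 1] by auto
  have "d0 \<noteq> d1" "d0 \<noteq> d2" "d1 \<noteq> d2" using d0 d1 d2 j by force+
  then obtain d where d: "d \<in> {d0, d1, d2}" "d \<notin> {c0, c1}" by blast
  then have "d \<in> C - {c0, c1}" using \<open>d0 \<in> C\<close> \<open>d1 \<in> C\<close> \<open>d2 \<in> C\<close> by blast
  moreover have "E d j - 1 = f j" if "j \<in> J" for j
    using that d(1) d0 d1 d2 False by auto
  ultimately show ?thesis by blast
qed

lemma ex_bij_betw_lessThan_0_1:
  assumes "finite S" "a \<in> S" "b \<in> S" "a \<noteq> b"
  obtains e where "bij_betw e S {..<card S}" "e a = 0" "e b = 1"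
proof -
  let ?D = "S - {a, b}"
  obtain g where g: "bij_betw g ?D {0..<card ?D}"
    using ex_bij_betw_finite_nat assms(1) by blast
  define e where "e x = (if x = a then 0 else if x = b then 1 else g x + 2)" for x
  have "card ?D + 2 = card S"
    using assms card_mono[of S "{a, b}"] by (simp add: card_Diff_subset)
  have "bij_betw e S {..<card S}"
  proof -
    have "bij_betw ((+) 2) {0..<card ?D} {2..<card S}"
      unfolding bij_betw_add image_add_atLeastLessThan using \<open>card ?D + 2 = card S\<close>
      by (simp add: numeral_2_eq_2)
    then have "bij_betw ((+) 2 \<circ> g) ?D {2..<card S}" using g by (rule bij_betw_trans[rotated])
    then have "bij_betw e ?D {2..<card S}"
      by (rule bij_betw_cong[THEN iffD1, rotated]) (auto simp: e_def)
    moreover have "bij_betw e {a, b} {0, 1}"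
      using assms(4) by (auto simp: bij_betw_def inj_on_def e_def)
    ultimately have "bij_betw e (?D \<union> {a, b}) ({2..<card S} \<union> {0, 1})"
      by (rule bij_betw_combine) auto
    moreover have "?D \<union> {a, b} = S" using assms by auto
    moreover have "{2..<card S} \<union> {0, 1} = {..<card S}"
      using \<open>card ?D + 2 = card S\<close> by auto
    ultimately show ?thesis by simp
  qed
  then show ?thesis using that assms(4) by (simp add: e_def)
qed

lemma (in field) card_carrier_ge_2:
  assumes "finite (carrier R)" shows "2 \<le> card (carrier R)"
proof -
  have "card {\<zero>, \<one>} = 2" using zero_not_one by simp
  moreover have "card {\<zero>, \<one>} \<le> card (carrier R)" using assms by (intro card_mono) auto
  ultimately show ?thesis by simp
qed

lemma (in field) OCAN_le_field_card:
  assumes fin: "finite (carrier R)" and q: "card (carrier R) = q" and "t \<ge> 2"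
  shows "OCAN t (q + 1) t (q - 1) \<le> q ^ t - 2"
proof -
  let ?C = "{..<t} \<rightarrow>\<^sub>E carrier R"
  have "2 \<le> q" using card_carrier_ge_2[OF fin] q by simp
  obtain enc where enc: "bij_betw enc (carrier R) {..<q}" "enc \<zero> = 0" "enc \<one> = 1"
    using ex_bij_betw_lessThan_0_1[OF fin, of \<zero> \<one>] q by auto
  define x where "x = the_inv_into (carrier R) enc"
  have x: "inj_on x {..<q}" "x ` {..<q} \<subseteq> carrier R"
    using bij_betw_the_inv_into[OF enc(1)] unfolding x_def bij_betw_def by simp_all
  define c0 where "c0 = (\<lambda>i\<in>{..<t}. \<zero>)"
  define c1 where "c1 = (\<lambda>i\<in>{..<t}. if i = 0 then \<one> else \<zero>)"
  have "c0 \<in> ?C" "c1 \<in> ?C" "c0 \<noteq> c1"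
    using \<open>t \<ge> 2\<close> by (auto simp: c0_def c1_def fun_eq_iff)
  define E where "E c col = enc (rt_array_entry q t x c col)" for c col
  have realise: "\<exists>c\<in>?C. \<forall>j\<in>J. E c j = g j"
    if "rt_anti_ideal (q + 1) t J" "card J = t" "g \<in> J \<rightarrow>\<^sub>E {..<q}" for J g
    using encoded_rt_array_realises[OF fin enc(1) x _ that] \<open>t \<ge> 2\<close> by (simp add: E_def)
  have small: "E c0 j \<le> 1 \<and> E c1 j \<le> 1" for j
  proof -
    have "rt_array_entry q t x c j \<in> {\<zero>, \<one>}" if "c = c0 \<or> c = c1" for c
      using that \<open>t \<ge> 2\<close> unfolding c0_def c1_def
      by (intro rt_array_entry_const_rows[OF x(2)]) auto
    then show ?thesis using enc(2,3) unfolding E_def by fastforce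
  qed
  have "OCAN t (q + 1) t (q - 1) \<le> card (?C - {c0, c1})"
  proof (rule OCAN_le_card_rows[where E = "\<lambda>c col. E c col - 1"])
    show "finite (?C - {c0, c1})" using fin by (simp add: finite_PiE)
    show "E c col - 1 < q - 1" if "c \<in> ?C - {c0, c1}" for c col
    proof -
      have "rt_array_entry q t x c col \<in> carrier R"
        using that \<open>t \<ge> 2\<close> by (intro rt_array_entry_closed[OF x(2)]) (auto simp: PiE_def)
      then have "E c col < q" unfolding E_def using bij_betwE[OF enc(1)] by blast
      then show ?thesis using \<open>2 \<le> q\<close> by linarith
    qed
    show "\<exists>c\<in>?C - {c0, c1}. \<forall>j\<in>J. E c j - 1 = f j"
      if "rt_anti_ideal (q + 1) t J" "card J = t" "f \<in> J \<rightarrow>\<^sub>E {..<q - 1}" for J f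
      by (rule cover_after_merging_0_1[OF _ \<open>2 \<le> q\<close> realise[OF that(1,2)] _ that(3)])
        (use small that(2) \<open>t \<ge> 2\<close> in auto)
  qed
  also have "card (?C - {c0, c1}) = q ^ t - 2"
    using \<open>c0 \<in> ?C\<close> \<open>c1 \<in> ?C\<close> \<open>c0 \<noteq> c1\<close> fin q by (simp add: card_Diff_subset card_PiE finite_PiE)
  finally show ?thesis .
qed

theorem corollary3:
  fixes q t :: nat
  assumes "primepow q" and "t \<ge> 2"
  shows "OCAN t (q + 1) t (q - 1) \<le> q ^ t - 2"
proof -
  obtain F :: "((int list \<times> nat) multiset \<Rightarrow> int) ring"
    where F: "field F" and q: "card (carrier F) = q"
    using exists_field_card_primepow[OF assms(1)] .
  have "finite (carrier F)"
    using q primepow_gt_Suc_0[OF assms(1)] card_ge_0_finite by force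
  then show ?thesis using field.OCAN_le_field_card[OF F _ q assms(2)] by simp
qed

end
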